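(* For all relational types $R,R'$, terms $t_1,t_2$ and environment $\gamma$: $t_1\,\llbracket R\Rightarrow R'\rrbracket_\gamma\,t_2$ holds iff for all $(x,x')\in\llbracket R\rrbracket_\gamma$, $t_1\,\llbracket R'\rrbracket_\gamma\,t_2$.
   Context: Terms are those of the pure untyped $\lambda$-calculus, up to $\alpha$-equivalence; $=_{\beta\eta}$ is $\beta\eta$-convertibility. Relational types: $R ::= X \mid R\to R' \mid \forall X.R \mid R^{\cup} \mid R\cdot R' \mid t$ (last form: promotion of a term). A relation on terms is $\beta\eta$-closed if closed under replacing either related term by a $\beta\eta$-equal one; $\mathcal{R}$ is the set of such relations; environments $\gamma$ map finitely many type variables to $\mathcal{R}$. Interpretation: $\llbracket X\rrbracket_\gamma=\gamma(X)$; $t\,\llbracket R\to R'\rrbracket_\gamma\,t'$ iff for all $a,a'$ with $a\,\llbracket R\rrbracket_\gamma\,a'$, $t\,a\,\llbracket R'\rrbracket_\gamma\,t'\,a'$; $\llbracket \forall X.R\rrbracket_\gamma=\bigcap_{r\in\mathcal{R}}\llbracket R\rrbracket_{\gamma[X\mapsto r]}$; $t\,\llbracket R^\cup\rrbracket_\gamma\,t'$ iff $t'\,\llbracket R\rrbracket_\gamma\,t$; $t\,\llbracket R\cdot R'\rrbracket_\gamma\,t'$ iff $\exists t''$, $t\,\llbracket R\rrbracket_\gamma\,t''$ and $t''\,\llbracket R'\rrbracket_\gamma\,t'$; $\llbracket \hat t\rrbracket_\gamma=\{(t,t')\mid \hat t\,t=_{\beta\eta}t'\}$. Let $K:=\lambda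 x.\lambda y.x$, $t\bullet R:=t\cdot R\cdot t^\cup$, and $R\Rightarrow R':=K\bullet(R\to R')$. *)

theory Defs
  imports Main
begin

datatype trm = Var nat | App trm trm | Abs trm

primrec lift :: "trm \<Rightarrow> nat \<Rightarrow> trm" where
  "lift (Var i) k = (if i < k then Var i else Var (Suc i))"
| "lift (App s t) k = App (lift s k) (lift t k)"
| "lift (Abs s) k = Abs (lift s (Suc k))"

primrec subst :: "trm \<Rightarrow> trm \<Rightarrow> nat \<Rightarrow> trm" where
  "subst (Var i) t k = (if k < i then Var (i - 1) else if i = k then t else Var i)"
| "subst (App s u) t k = App (subst s t k) (subst u t k)"
| "subst (Abs s) t k = Abs (subst s (lift t 0) (Suc k))"

inductive beta_eta :: "trm \<Rightarrow> trm \<Rightarrow> bool" where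
  beta: "beta_eta (App (Abs s) t) (subst s t 0)"
| eta: "beta_eta (Abs (App (lift s 0) (Var 0))) s"
| appL: "beta_eta s s' \<Longrightarrow> beta_eta (App s t) (App s' t)"
| appR: "beta_eta t t' \<Longrightarrow> beta_eta (App s t) (App s t')"
| abs: "beta_eta s s' \<Longrightarrow> beta_eta (Abs s) (Abs s')"

definition bequiv :: "trm \<Rightarrow> trm \<Rightarrow> bool" where
  "bequiv = equivclp beta_eta"

type_synonym rel = "trm \<Rightarrow> trm \<Rightarrow> bool"

definition bclosed :: "rel \<Rightarrow> bool" where
  "bclosed r \<longleftrightarrow> (\<forall>t t' u. r t t' \<longrightarrow> bequiv t u \<longrightarrow> r u t') \<and>
                   (\<forall>t t' u. r t t' \<longrightarrow> bequiv t' u \<longrightarrow> r t u)"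

datatype rtyp = TVar nat | Arr rtyp rtyp | All nat rtyp | Conv rtyp | Comp rtyp rtyp | Prom trm

primrec ftv :: "rtyp \<Rightarrow> nat set" where
  "ftv (TVar X) = {X}"
| "ftv (Arr R R') = ftv R \<union> ftv R'"
| "ftv (All X R) = ftv R - {X}"
| "ftv (Conv R) = ftv R"
| "ftv (Comp R R') = ftv R \<union> ftv R'"
| "ftv (Prom t) = {}"

type_synonym env = "nat \<rightharpoonup> rel"

definition wf_env :: "env \<Rightarrow> bool" where
  "wf_env \<gamma> \<longleftrightarrow> finite (dom \<gamma>) \<and> (\<forall>X r. \<gamma> X = Some r \<longrightarrow> bclosed r)"

text \<open>Unbound variables (never occurring under the hypotheses used) get the empty relation.\<close>
primrec interp :: "rtyp \<Rightarrow> env \<Rightarrow> rel" where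
  "interp (TVar X) \<gamma> = (case \<gamma> X of Some r \<Rightarrow> r | None \<Rightarrow> (\<lambda>_ _. False))"
| "interp (Arr R R') \<gamma> = (\<lambda>t t'. \<forall>a a'. interp R \<gamma> a a' \<longrightarrow> interp R' \<gamma> (App t a) (App t' a'))"
| "interp (All X R) \<gamma> = (\<lambda>t t'. \<forall>r. bclosed r \<longrightarrow> interp R (\<gamma>(X \<mapsto> r)) t t')"
| "interp (Conv R) \<gamma> = (\<lambda>t t'. interp R \<gamma> t' t)"
| "interp (Comp R R') \<gamma> = (\<lambda>t t'. \<exists>t''. interp R \<gamma> t t'' \<and> interp R' \<gamma> t'' t')"
| "interp (Prom u) \<gamma> = (\<lambda>t t'. bequiv (App u t) t')"

definition Kc :: trm where "Kc = Abs (Abs (Var 1))"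

definition bullet :: "trm \<Rightarrow> rtyp \<Rightarrow> rtyp" where
  "bullet t R = Comp (Comp (Prom t) R) (Conv (Prom t))"

definition Imp :: "rtyp \<Rightarrow> rtyp \<Rightarrow> rtyp" where
  "Imp R R' = bullet Kc (Arr R R')"

end

theory Submission
  imports Defs
begin

text \<open>Every interpreted relational type is beta-eta-closed, so \<open>t \<bullet> R\<close> relates \<open>s\<close> and \<open>s'\<close>
  exactly when \<open>R\<close> relates \<open>t s\<close> and \<open>t s'\<close>. For \<open>t = K\<close> both sides become constant
  functions, and \<open>K t\<^sub>1 \<lbrakk>R \<rightarrow> R'\<rbrakk> K t\<^sub>2\<close> says that \<open>K t\<^sub>1 a \<lbrakk>R'\<rbrakk> K t\<^sub>2 a'\<close>, i.e. \<open>t\<^sub>1 \<lbrakk>R'\<rbrakk> t\<^sub>2\<close>,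
  whenever \<open>a \<lbrakk>R\<rbrakk> a'\<close>.\<close>

lemma equivclp_cong:
  assumes "equivclp r s s'" and "\<And>x y. r x y \<Longrightarrow> r (f x) (f y)"
  shows "equivclp r (f s) (f s')"
  using assms(1)
proof (induction rule: equivclp_induct)
  case base
  then show ?case by simp
next
  case (step y z)
  then show ?case by (metis assms(2) equivclp_into_equivclp)
qed

lemma bequiv_refl [simp]: "bequiv s s"
  by (simp add: bequiv_def)

lemma bequiv_sym: "bequiv s t \<Longrightarrow> bequiv t s"
  unfolding bequiv_def by (rule equivclp_sym)

lemma bequiv_trans: "bequiv s t \<Longrightarrow> bequiv t u \<Longrightarrow> bequiv s u"
  unfolding bequiv_def by (rule equivclp_trans)

lemma bequiv_App:
  assumes "bequiv s s'" and "bequiv t t'"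
  shows "bequiv (App s t) (App s' t')"
proof -
  have "bequiv (App s t) (App s' t)"
    using assms(1) unfolding bequiv_def
    by (rule equivclp_cong[where f = "\<lambda>x. App x t"]) (rule beta_eta.appL)
  moreover have "bequiv (App s' t) (App s' t')"
    using assms(2) unfolding bequiv_def
    by (rule equivclp_cong[where f = "App s'"]) (rule beta_eta.appR)
  ultimately show ?thesis by (rule bequiv_trans)
qed

lemma subst_lift: "subst (lift t k) a k = t"
  by (induction t arbitrary: k a) auto

lemma bequiv_Kc: "bequiv (App (App Kc t) a) t"
proof -
  have "beta_eta (App (App Kc t) a) (App (Abs (lift t 0)) a)"
    unfolding Kc_def using beta_eta.appL[OF beta_eta.beta[of "Abs (Var 1)" t]] by simp
  moreover have "beta_eta (App (Abs (lift t 0)) a) t"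
    using beta_eta.beta[of "lift t 0" a] by (simp add: subst_lift)
  ultimately show ?thesis
    unfolding bequiv_def by (meson r_into_equivclp equivclp_trans)
qed

lemma bclosed_iff:
  "bclosed r \<longleftrightarrow> (\<forall>s s' u u'. r s s' \<longrightarrow> bequiv s u \<longrightarrow> bequiv s' u' \<longrightarrow> r u u')"
  unfolding bclosed_def by (metis bequiv_refl)

lemma bclosedI:
  "(\<And>s s' u u'. r s s' \<Longrightarrow> bequiv s u \<Longrightarrow> bequiv s' u' \<Longrightarrow> r u u') \<Longrightarrow> bclosed r"
  unfolding bclosed_iff by blast

lemma bclosedD: "bclosed r \<Longrightarrow> r s s' \<Longrightarrow> bequiv s u \<Longrightarrow> bequiv s' u' \<Longrightarrow> r u u'"
  unfolding bclosed_iff by blast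

lemma wf_env_upd: "wf_env \<gamma> \<Longrightarrow> bclosed r \<Longrightarrow> wf_env (\<gamma>(X \<mapsto> r))"
  unfolding wf_env_def by auto

lemma interp_bclosed: "wf_env \<gamma> \<Longrightarrow> ftv R \<subseteq> dom \<gamma> \<Longrightarrow> bclosed (interp R \<gamma>)"
proof (induction R arbitrary: \<gamma>)
  case (TVar X)
  then show ?case by (auto simp: wf_env_def)
next
  case (Arr R\<^sub>1 R\<^sub>2)
  then have "bclosed (interp R\<^sub>2 \<gamma>)" by simp
  then show ?case
    by (auto intro!: bclosedI elim!: bclosedD intro: bequiv_App)
next
  case (All X R)
  have closed: "bclosed (interp R (\<gamma>(X \<mapsto> r)))" if "bclosed r" for r
    using All.prems that by (intro All.IH wf_env_upd) auto
  show ?case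
  proof (rule bclosedI)
    fix s s' u u'
    assume related: "interp (All X R) \<gamma> s s'" and "bequiv s u" "bequiv s' u'"
    have "interp R (\<gamma>(X \<mapsto> r)) u u'" if "bclosed r" for r
      by (rule bclosedD[OF closed[OF that] _ \<open>bequiv s u\<close> \<open>bequiv s' u'\<close>])
        (use related that in simp)
    then show "interp (All X R) \<gamma> u u'" by simp
  qed
next
  case (Conv R)
  then have "bclosed (interp R \<gamma>)" by simp
  then show ?case
    by (auto intro!: bclosedI elim!: bclosedD)
next
  case (Comp R\<^sub>1 R\<^sub>2)
  then have closed: "bclosed (interp R\<^sub>1 \<gamma>)" "bclosed (interp R\<^sub>2 \<gamma>)" by auto
  show ?case
  proof (rule bclosedI)
    fix s s' u u'
    assume "interp (Comp R\<^sub>1 R\<^sub>2) \<gamma> s s'" and "bequiv s u" "bequiv s' u'"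
    then obtain m where "interp R\<^sub>1 \<gamma> s m" "interp R\<^sub>2 \<gamma> m s'" by auto
    then have "interp R\<^sub>1 \<gamma> u m" "interp R\<^sub>2 \<gamma> m u'"
      using bclosedD[OF closed(1) _ \<open>bequiv s u\<close> bequiv_refl]
        bclosedD[OF closed(2) _ bequiv_refl \<open>bequiv s' u'\<close>] by auto
    then show "interp (Comp R\<^sub>1 R\<^sub>2) \<gamma> u u'" by auto
  qed
next
  case (Prom t)
  show ?case
    by (auto intro!: bclosedI) (meson bequiv_App bequiv_refl bequiv_sym bequiv_trans)
qed

lemma interp_bullet:
  assumes "bclosed (interp R \<gamma>)"
  shows "interp (bullet t R) \<gamma> s s' \<longleftrightarrow> interp R \<gamma> (App t s) (App t s')"
proof
  assume "interp (bullet t R) \<gamma> s s'"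
  then show "interp R \<gamma> (App t s) (App t s')"
    using assms unfolding bullet_def by (auto elim!: bclosedD intro: bequiv_sym)
next
  assume "interp R \<gamma> (App t s) (App t s')"
  then show "interp (bullet t R) \<gamma> s s'"
    unfolding bullet_def by simp (meson bequiv_refl)
qed

theorem mainTheorem18:
  assumes "wf_env \<gamma>" and "ftv R \<union> ftv R' \<subseteq> dom \<gamma>"
  shows "interp (Imp R R') \<gamma> t1 t2 \<longleftrightarrow> (\<forall>x x'. interp R \<gamma> x x' \<longrightarrow> interp R' \<gamma> t1 t2)"
proof -
  have closed: "bclosed (interp R' \<gamma>)" "bclosed (interp (Arr R R') \<gamma>)"
    by (rule interp_bclosed; use assms in auto)+
  have Kc_app: "interp R' \<gamma> (App (App Kc t1) a) (App (App Kc t2) a') \<longleftrightarrow> interp R' \<gamma> t1 t2"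
    for a a'
    using closed(1) by (meson bclosedD bequiv_Kc bequiv_sym)
  have "interp (Imp R R') \<gamma> t1 t2 \<longleftrightarrow> interp (Arr R R') \<gamma> (App Kc t1) (App Kc t2)"
    unfolding Imp_def using closed(2) by (rule interp_bullet)
  also have "\<dots> \<longleftrightarrow> (\<forall>x x'. interp R \<gamma> x x' \<longrightarrow> interp R' \<gamma> t1 t2)"
    by (simp add: Kc_app)
  finally show ?thesis .
qed

end
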